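(* Let $\gamma_{-1},\gamma_0,\gamma_1\in\mathbb{C}$ satisfy $\gamma_{-1}+\gamma_0+\gamma_1=0$ and $\gamma_1-\gamma_{-1}=1$, and for $\varepsilon>0$ let $\Box_\varepsilon$ be the operator with coefficients $c_\ell=\gamma_\ell/\varepsilon$, $\ell\in\{-1,0,1\}$. For real $p,q$ with $pq<0$ and $\varepsilon>0$ let \[ D_{\varepsilon}(\lambda)=p\,c_{-1}c_1(\lambda^4+1)+p\,c_0(c_{-1}+c_1)(\lambda^3+\lambda)+\big(q+p(c_{-1}^2+c_0^2+c_1^2)\big)\lambda^2 \] be the characteristic polynomial of the recurrence $p c_{-1}c_1[x(t-2\varepsilon)+x(t+2\varepsilon)]+p c_0(c_{-1}+c_1)[x(t-\varepsilon)+x(t+\varepsilon)]+(q+p(c_{-1}^2+c_0^2+c_1^2))x(t)=0$ (the discrete Euler–Lagrange equation of $\mathcal L=\frac12p\dot x^2+\frac12qx^2$ on the safety interval). The following are equivalent: (a) for all real $p,q$ with $pq<0$ there is $\varepsilon_0>0$ such that for all $\varepsilon\in(0,\varepsilon_0)$ every root of $D_\varepsilon$ has modulus $1$; (b) there exists $k\in\mathbb{R}$ with $\Box_\varepsilon=\Box_\varepsilon^{[\frac12,\frac12]}+ik\,\Box_\varepsilon^{[1,-1]}$, i.e. $(\gamma_{-1},\gamma_0,\gamma_1)=(-\tfrac12+ik,\,-2ik,\,\tfrac12+ik)$.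
   Context: Fix $[a,b]$ and $\varepsilon>0$; $\chi_\ell$ is the indicator function of $[\max(a,a+\ell\varepsilon),\min(b,b+\ell\varepsilon)]$. For $N=1$ and coefficients $c_{-1},c_0,c_1$, $\Box_\varepsilon x(t)=c_{-1}x(t-\varepsilon)\chi_1(t)+c_0x(t)+c_1x(t+\varepsilon)\chi_{-1}(t)$. For $r,s\in\mathbb{C}$, $\Box^{[r,s]}_\varepsilon x(t)=-\chi_{1}(t)\frac{s}{\varepsilon}x(t-\varepsilon)+\frac{s-r}{\varepsilon}x(t)+\chi_{-1}(t)\frac{r}{\varepsilon}x(t+\varepsilon)$; thus $\Box^{[1/2,1/2]}_\varepsilon$ has coefficients $(\gamma_{-1},\gamma_0,\gamma_1)=(-\frac12,0,\frac12)$ and $\Box^{[1,-1]}_\varepsilon$ has $(1,-2,1)$ (in units of $1/\varepsilon$). The conditions $\gamma_{-1}+\gamma_0+\gamma_1=0$, $\gamma_1-\gamma_{-1}=1$ express that $\Box_\varepsilon 1=0$ and $\Box_\varepsilon t=1$ on the safety interval $[a+2\varepsilon,b-2\varepsilon]$. *)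

theory Defs
  imports Complex_Main "HOL-Computational_Algebra.Polynomial"
begin

definition box_coeff :: "complex \<Rightarrow> real \<Rightarrow> complex" where
  "box_coeff g eps = g / complex_of_real eps"

definition char_poly :: "real \<Rightarrow> real \<Rightarrow> complex \<Rightarrow> complex \<Rightarrow> complex \<Rightarrow> complex poly" where
  "char_poly p q cm c0 c1 =
     (let A = complex_of_real p * cm * c1;
          B = complex_of_real p * c0 * (cm + c1);
          C = complex_of_real q + complex_of_real p * (cm\<^sup>2 + c0\<^sup>2 + c1\<^sup>2)
      in [:A, B, C, B, A:])"

definition D_eps :: "complex \<Rightarrow> complex \<Rightarrow> complex \<Rightarrow> real \<Rightarrow> real \<Rightarrow> real \<Rightarrow> complex poly" where
  "D_eps gm g0 g1 p q eps =
     char_poly p q (box_coeff gm eps) (box_coeff g0 eps) (box_coeff g1 eps)"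

end

theory Submission
  imports Defs
begin

(* Under gm + g0 + g1 = 0 and g1 - gm = 1 the coefficients are
   gm = a - 1/2, g0 = -2a, g1 = a + 1/2 for a = gm + 1/2, and D_eps is a
   nonzero multiple of the palindromic quartic
       b (z-1)^4 - (z^2-1)^2/4 - s z^2,      b = a^2,  s = -q eps^2/p > 0.
   Dividing by z^2 and substituting w = z + 1/z (the Joukowski map) turns it
   into the quadratic  b (w-2)^2 - (w^2-4)/4 - s.  Since z + 1/z maps C-{0}
   onto C and the unit circle exactly onto the real segment [-2,2], all roots
   of D_eps are unimodular iff b <> 1/4 and all roots w lie on [-2,2].
   - If b = -m with m >= 0 (i.e. Re a = 0), completing the square gives
     ((4m+1) w - 8m)^2 = 4 (1 - s (4m+1)), so for s (4m+1) <= 1 the roots are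
     real and in [-2,2].
   - Conversely, factoring the quadratic as (b-1/4)(w-w1)(w-w2) with w1, w2 in
     [-2,2] and evaluating at w = 2 and w = -2 shows that b is real with
     16 b <= s; letting eps -> 0 forces b = a^2 <= 0, i.e. Re a = 0.
   The file first proves the reduction of D_eps to the quadratic, then the
   two directions for the quadratic, lifts them to D_eps, and finally derives
   mainTheorem3 by identifying condition (b) with Re a = 0. *)

definition norm_quartic :: "complex \<Rightarrow> real \<Rightarrow> complex \<Rightarrow> complex" where
  "norm_quartic b s z = b * (z - 1)^4 - (z^2 - 1)^2 / 4 - of_real s * z^2"

definition joukowski_quadratic :: "complex \<Rightarrow> real \<Rightarrow> complex \<Rightarrow> complex" where
  "joukowski_quadratic b s w = b * (w - 2)^2 - (w^2 - 4) / 4 - of_real s"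

text \<open>The real segment [-2,2], image of the unit circle under the Joukowski map.\<close>
definition on_segment :: "complex \<Rightarrow> bool" where
  "on_segment w \<longleftrightarrow> Im w = 0 \<and> \<bar>Re w\<bar> \<le> 2"

lemma poly_D_eps_eq:
  fixes gm g0 g1 :: complex
  assumes "gm + g0 + g1 = 0" "g1 - gm = 1" "eps \<noteq> 0" "p \<noteq> 0"
  shows "poly (D_eps gm g0 g1 p q eps) z
           = of_real (p / eps^2) * norm_quartic ((gm + 1/2)^2) (- q * eps^2 / p) z"
proof -
  have g1: "g1 = gm + 1" and g0: "g0 = - 2 * gm - 1"
    using assms(1,2) by (simp_all add: algebra_simps eq_neg_iff_add_eq_0)
  show ?thesis
    unfolding D_eps_def char_poly_def box_coeff_def norm_quartic_def Let_def g1 g0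
    using assms(3,4) by (simp add: field_simps power2_eq_square power4_eq_xxxx)
qed

lemma norm_quartic_joukowski:
  assumes "z \<noteq> 0"
  shows "norm_quartic b s z = z^2 * joukowski_quadratic b s (z + 1/z)"
  using assms unfolding norm_quartic_def joukowski_quadratic_def
  by (simp add: field_simps power2_eq_square power4_eq_xxxx)

lemma norm_quartic_0: "norm_quartic b s 0 = b - 1/4"
  by (simp add: norm_quartic_def)

lemma unit_circle_iff_on_segment:
  fixes z :: complex
  assumes "z \<noteq> 0"
  shows "cmod z = 1 \<longleftrightarrow> on_segment (z + 1/z)"
proof
  assume unit: "cmod z = 1"
  have "z * cnj z = 1" using complex_norm_square[of z] unit by simp
  then have "1/z = cnj z" by (metis divide_eq_eq mult.commute mult_zero_left zero_neq_one)
  moreover have "\<bar>Re z\<bar> \<le> 1" using abs_Re_le_cmod[of z] unit by simp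
  ultimately show "on_segment (z + 1/z)" by (simp add: on_segment_def)
next
  assume seg: "on_segment (z + 1/z)"
  obtain x y where xy: "z = Complex x y" by (cases z)
  define n where "n = x^2 + y^2"
  have n0: "n \<noteq> 0" using assms xy by (simp add: n_def complex_eq_iff)
  have "y * (n - 1) / n = Im (z + 1/z)"
    using n0 xy by (simp add: n_def Im_divide power2_eq_square field_simps)
  then have "y = 0 \<or> n = 1" using seg n0 by (simp add: on_segment_def)
  then show "cmod z = 1"
  proof
    assume y0: "y = 0"
    then have x0: "x \<noteq> 0" using n0 by (simp add: n_def)
    have "Re (z + 1/z) = x + 1/x" using xy y0 by (simp add: Re_divide power2_eq_square)
    then have "\<bar>x + 1/x\<bar> \<le> 2" using seg by (simp add: on_segment_def)
    moreover have "\<bar>x + 1/x\<bar> = \<bar>x\<bar> + 1/\<bar>x\<bar>"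
      using x0 by (cases "x > 0") (auto simp: field_simps)
    ultimately have "\<bar>x\<bar> * \<bar>x\<bar> + 1 \<le> 2 * \<bar>x\<bar>"
      using x0 by (simp add: field_simps)
    then have "(\<bar>x\<bar> - 1)^2 \<le> 0" by (simp add: power2_eq_square algebra_simps)
    then show ?thesis using xy y0 by (simp add: cmod_def)
  qed (simp add: xy n_def cmod_def)
qed

lemma joukowski_surj: "\<exists>z::complex. z \<noteq> 0 \<and> z + 1/z = w"
proof -
  define r where "r = csqrt (w^2 - 4)"
  have r2: "r^2 = w^2 - 4" by (simp add: r_def)
  define z where "z = (w + r) / 2"
  have prod: "z * ((w - r) / 2) = 1"
    using r2 unfolding z_def by (simp add: field_simps power2_eq_square)
  have inv: "1/z = (w - r) / 2"
    using inverse_unique[OF prod] by (simp add: inverse_eq_divide)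
  have "z \<noteq> 0" using prod by auto
  moreover have "z + 1/z = w"
    unfolding inv by (simp add: z_def add_divide_distrib[symmetric])
  ultimately show ?thesis by blast
qed

lemma quartic_roots_unimodular_iff:
  "(\<forall>z. norm_quartic b s z = 0 \<longrightarrow> cmod z = 1) \<longleftrightarrow>
   b \<noteq> 1/4 \<and> (\<forall>w. joukowski_quadratic b s w = 0 \<longrightarrow> on_segment w)"
proof (intro iffI conjI allI impI)
  assume roots: "\<forall>z. norm_quartic b s z = 0 \<longrightarrow> cmod z = 1"
  show "b \<noteq> 1/4"
  proof
    assume "b = 1/4"
    then have "norm_quartic b s 0 = 0" by (simp add: norm_quartic_0)
    then show False using roots by fastforce
  qed
  fix w assume root: "joukowski_quadratic b s w = 0"
  obtain z where z: "z \<noteq> 0" "z + 1/z = w" using joukowski_surj by blast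
  then have "norm_quartic b s z = 0" using root by (simp add: norm_quartic_joukowski)
  then have "cmod z = 1" using roots by blast
  then show "on_segment w" using unit_circle_iff_on_segment z by blast
next
  fix z assume H: "b \<noteq> 1/4 \<and> (\<forall>w. joukowski_quadratic b s w = 0 \<longrightarrow> on_segment w)"
    and root: "norm_quartic b s z = 0"
  have z0: "z \<noteq> 0" using H root by (auto simp: norm_quartic_0)
  then have "joukowski_quadratic b s (z + 1/z) = 0" using root by (simp add: norm_quartic_joukowski)
  then show "cmod z = 1" using H unit_circle_iff_on_segment[OF z0] by blast
qed

text \<open>The same statement for D_eps itself, the nonzero factor p/eps^2 being irrelevant.\<close>
lemma D_eps_roots_unimodular_iff:
  fixes gm g0 g1 :: complex
  assumes "gm + g0 + g1 = 0" "g1 - gm = 1" "eps \<noteq> 0" "p \<noteq> 0"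
  shows "(\<forall>z. poly (D_eps gm g0 g1 p q eps) z = 0 \<longrightarrow> cmod z = 1) \<longleftrightarrow>
         (gm + 1/2)^2 \<noteq> 1/4 \<and>
         (\<forall>w. joukowski_quadratic ((gm + 1/2)^2) (- q * eps^2 / p) w = 0 \<longrightarrow> on_segment w)"
  using assms quartic_roots_unimodular_iff poly_D_eps_eq[OF assms] by simp

text \<open>Sufficiency: for b = -m with m >= 0 and 0 <= s (4m+1) <= 1, completing the
  square shows that both roots are real and lie in [-2,2].\<close>
lemma joukowski_roots_on_segment:
  fixes m s :: real
  assumes m: "m \<ge> 0" and s: "s \<ge> 0" "s * (4*m + 1) \<le> 1"
    and root: "joukowski_quadratic (- of_real m) s w = 0"
  shows "on_segment w"
proof -
  define L where "L = 4*m + 1"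
  define d where "d = 4 * (1 - s * L)"
  have L0: "L > 0" and d: "0 \<le> d" "d \<le> 4"
    using m s by (simp_all add: L_def d_def)
  have "(of_real L * w - 8 * of_real m)^2 - of_real d
          = -4 * of_real L * joukowski_quadratic (- of_real m) s w"
    unfolding joukowski_quadratic_def d_def L_def by (simp add: power2_eq_square field_simps)
  then have "(of_real L * w - 8 * of_real m)^2 = (complex_of_real (sqrt d))^2"
    using root d by (simp flip: of_real_power)
  then obtain \<sigma> :: real where \<sigma>: "\<bar>\<sigma>\<bar> = sqrt d" and eq: "of_real L * w - 8 * of_real m = of_real \<sigma>"
    unfolding power2_eq_iff by (metis abs_of_nonneg abs_minus_cancel of_real_minus real_sqrt_ge_zero d(1))
  have "sqrt d \<le> 2" using d real_sqrt_le_mono[of d 4] by simp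
  then have "\<bar>(8*m + \<sigma>) / L\<bar> \<le> 2"
    using \<sigma> m L0 by (auto simp: L_def abs_le_iff divide_le_eq le_divide_eq)
  moreover have "w = of_real ((8*m + \<sigma>) / L)" using eq L0 by (simp add: field_simps)
  ultimately show ?thesis by (simp add: on_segment_def)
qed

lemma complex_quadratic_factor:
  fixes L B C :: complex
  assumes "L \<noteq> 0"
  shows "\<exists>w1 w2. \<forall>x. L * x^2 + B * x + C = L * (x - w1) * (x - w2)"
proof -
  define r where "r = csqrt (B^2 - 4*L*C)"
  have r2: "r^2 = B^2 - 4*L*C" by (simp add: r_def)
  have C: "C = (B^2 - r^2)/(4*L)" using assms r2 by simp
  have "L * x^2 + B * x + C = L * (x - (-B + r)/(2*L)) * (x - (-B - r)/(2*L))" for x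
    unfolding C using assms by (simp add: field_simps power2_eq_square)
  then show ?thesis by blast
qed

text \<open>Write the quadratic as (b - 1/4)(w-u1)(w-u2) with u1, u2 in [-2,2]; its
  value -s at w = 2 makes b - 1/4 a negative real, and then its value 16 b - s at
  w = -2 is a nonpositive real.\<close>
lemma joukowski_roots_on_segment_imp:
  fixes b :: complex and s :: real
  assumes s: "s > 0" and b: "b \<noteq> 1/4"
    and roots: "\<forall>w. joukowski_quadratic b s w = 0 \<longrightarrow> on_segment w"
  shows "\<exists>\<beta>. b = of_real \<beta> \<and> 16 * \<beta> \<le> s"
proof -
  have expand: "joukowski_quadratic b s x = (b - 1/4) * x^2 + (- 4*b) * x + (4*b + 1 - of_real s)" for x
    unfolding joukowski_quadratic_def by (simp add: power2_eq_square field_simps)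
  obtain w1 w2 where factor: "\<And>x. joukowski_quadratic b s x = (b - 1/4) * (x - w1) * (x - w2)"
    using complex_quadratic_factor[of "b - 1/4" "- 4*b" "4*b + 1 - of_real s"] b
    unfolding expand by auto
  have "on_segment w1" "on_segment w2" using roots factor by auto
  then obtain u1 u2 where u: "w1 = of_real u1" "w2 = of_real u2" "\<bar>u1\<bar> \<le> 2" "\<bar>u2\<bar> \<le> 2"
    unfolding on_segment_def by (metis complex_is_Real_iff of_real_Re)
  define \<rho> where "\<rho> = (2 - u1) * (2 - u2)"
  define \<rho>' where "\<rho>' = (2 + u1) * (2 + u2)"
  have \<rho>: "\<rho> \<ge> 0" "\<rho>' \<ge> 0" using u by (simp_all add: \<rho>_def \<rho>'_def)
  have "- of_real s = joukowski_quadratic b s 2" by (simp add: joukowski_quadratic_def)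
  also have "\<dots> = (b - 1/4) * ((2 - w1) * (2 - w2))" by (simp add: factor mult.assoc)
  also have "(2 - w1) * (2 - w2) = of_real \<rho>" by (simp add: u \<rho>_def)
  finally have at2: "- of_real s = (b - 1/4) * of_real \<rho>" .
  have "16 * b - of_real s = joukowski_quadratic b s (-2)" by (simp add: joukowski_quadratic_def)
  also have "\<dots> = (b - 1/4) * ((-2 - w1) * (-2 - w2))" by (simp add: factor mult.assoc)
  also have "(-2 - w1) * (-2 - w2) = of_real \<rho>'" by (simp add: u \<rho>'_def algebra_simps)
  finally have atm2: "16 * b - of_real s = (b - 1/4) * of_real \<rho>'" .
  have "\<rho> \<noteq> 0" using at2 s by auto
  then have b14: "b - 1/4 = of_real (- s / \<rho>)" using at2 by (simp add: field_simps)
  have "16 * b = of_real (s - s * \<rho>' / \<rho>)"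
    using atm2 unfolding b14 by (simp add: algebra_simps)
  then have "b = of_real ((s - s * \<rho>' / \<rho>) / 16)" by (simp add: field_simps)
  moreover have "s * \<rho>' / \<rho> \<ge> 0" using s \<rho> by simp
  ultimately show ?thesis by (intro exI[of _ "(s - s * \<rho>' / \<rho>) / 16"]) auto
qed

lemma square_nonpos_real_imp_imaginary:
  fixes a :: complex
  assumes sq: "a^2 = of_real \<beta>" and "\<beta> \<le> 0"
  shows "Re a = 0"
proof -
  have "Re a = 0 \<or> Im a = 0" "(Re a)^2 - (Im a)^2 = \<beta>"
    using arg_cong[OF sq, of Im] arg_cong[OF sq, of Re] by (auto simp: power2_eq_square)
  moreover have "(Re a)^2 \<ge> 0" by simp
  ultimately have "(Re a)^2 = 0" using \<open>\<beta> \<le> 0\<close> by auto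
  then show ?thesis by simp
qed

text \<open>Each such eps gives a^2 real with
  16 a^2 <= eps^2, and choosing eps^2 <= a^2 rules out a^2 > 0.\<close>
lemma unimodular_roots_imp_imaginary:
  fixes gm g0 g1 :: complex
  assumes cond: "gm + g0 + g1 = 0" "g1 - gm = 1" and "eps0 > 0"
    and stable: "\<forall>eps. 0 < eps \<and> eps < eps0 \<longrightarrow>
                   (\<forall>z. poly (D_eps gm g0 g1 1 (-1) eps) z = 0 \<longrightarrow> cmod z = 1)"
  shows "Re (gm + 1/2) = 0"
proof -
  have bound: "\<exists>\<beta>. (gm + 1/2)^2 = of_real \<beta> \<and> 16 * \<beta> \<le> eps^2"
    if "0 < eps" "eps < eps0" for eps :: real
    using stable that D_eps_roots_unimodular_iff[OF cond, of eps 1 "-1"]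
      joukowski_roots_on_segment_imp[of "eps^2" "(gm + 1/2)^2"] by simp
  obtain \<beta> where \<beta>: "(gm + 1/2)^2 = of_real \<beta>"
    using bound[of "eps0/2"] \<open>eps0 > 0\<close> by auto
  have "\<beta> \<le> 0"
  proof (rule ccontr)
    assume "\<not> \<beta> \<le> 0"
    define eps where "eps = min (eps0/2) (sqrt \<beta>)"
    have eps: "0 < eps" "eps < eps0" using \<open>eps0 > 0\<close> \<open>\<not> \<beta> \<le> 0\<close> by (auto simp: eps_def)
    have "eps^2 \<le> (sqrt \<beta>)^2" using eps by (intro power_mono) (auto simp: eps_def)
    moreover have "16 * \<beta> \<le> eps^2" using bound[OF eps] \<beta> by auto
    ultimately show False using \<open>\<not> \<beta> \<le> 0\<close> by simp
  qed
  then show ?thesis using square_nonpos_real_imp_imaginary[OF \<beta>] by blast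
qed

text \<open>Sufficiency: if a = gm + 1/2 = i k, then for p q < 0 all roots are unimodular as
  soon as s (4k^2+1) <= 1 with s = -q eps^2/p, i.e. for eps below an explicit eps0.\<close>
lemma imaginary_imp_unimodular_roots:
  fixes gm g0 g1 :: complex and p q :: real
  assumes cond: "gm + g0 + g1 = 0" "g1 - gm = 1"
    and imag: "Re (gm + 1/2) = 0" and pq: "p * q < 0"
  shows "\<exists>eps0 > 0. \<forall>eps. 0 < eps \<and> eps < eps0 \<longrightarrow>
           (\<forall>z. poly (D_eps gm g0 g1 p q eps) z = 0 \<longrightarrow> cmod z = 1)"
proof -
  define m where "m = (Im gm)^2"
  have m: "m \<ge> 0" "(gm + 1/2)^2 = - of_real m"
    using imag by (simp_all add: m_def complex_eq_iff power2_eq_square)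
  define c where "c = - q / p"
  have "c > 0" using pq by (auto simp: c_def mult_less_0_iff divide_less_0_iff)
  define eps0 where "eps0 = sqrt (1 / (c * (4*m + 1)))"
  have "eps0 > 0" using \<open>c > 0\<close> m by (simp add: eps0_def)
  moreover have "\<forall>z. poly (D_eps gm g0 g1 p q eps) z = 0 \<longrightarrow> cmod z = 1"
    if eps: "0 < eps" "eps < eps0" for eps
  proof -
    have "eps^2 \<le> eps0^2" using eps by (intro power_mono) auto
    also have "\<dots> = 1 / (c * (4*m + 1))" using \<open>c > 0\<close> m by (simp add: eps0_def)
    finally have "eps^2 \<le> 1 / (c * (4*m + 1))" .
    moreover have "c * (4*m + 1) > 0" using \<open>c > 0\<close> m(1) by simp
    ultimately have small: "c * eps^2 * (4*m + 1) \<le> 1"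
      by (simp add: le_divide_eq mult_ac)
    have "- q * eps^2 / p = c * eps^2" by (simp add: c_def)
    then have "\<forall>w. joukowski_quadratic ((gm + 1/2)^2) (- q * eps^2 / p) w = 0 \<longrightarrow> on_segment w"
      using joukowski_roots_on_segment[of m "c * eps^2"] m small \<open>c > 0\<close>
      by (simp add: mult.commute mult.left_commute)
    moreover have "(gm + 1/2)^2 \<noteq> 1/4" using m by (simp add: complex_eq_iff)
    moreover have "p \<noteq> 0" using pq by auto
    ultimately show ?thesis using D_eps_roots_unimodular_iff[OF cond, of eps p q] eps by simp
  qed
  ultimately show ?thesis by blast
qed

theorem mainTheorem3:
  fixes gm g0 g1 :: complex
  assumes "gm + g0 + g1 = 0"
    and "g1 - gm = 1"
  shows "(\<forall>p q :: real. p * q < 0 \<longrightarrow>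
            (\<exists>eps0 > 0. \<forall>eps. 0 < eps \<and> eps < eps0 \<longrightarrow>
               (\<forall>z. poly (D_eps gm g0 g1 p q eps) z = 0 \<longrightarrow> cmod z = 1)))
         \<longleftrightarrow>
         (\<exists>k :: real. gm = - 1/2 + \<i> * of_real k \<and> g0 = - 2 * \<i> * of_real k
                     \<and> g1 = 1/2 + \<i> * of_real k)"
proof -
  have g1: "g1 = gm + 1" and g0: "g0 = - 2 * gm - 1"
    using assms by (simp_all add: algebra_simps eq_neg_iff_add_eq_0)
  have "(\<exists>k :: real. gm = - 1/2 + \<i> * of_real k \<and> g0 = - 2 * \<i> * of_real k
                     \<and> g1 = 1/2 + \<i> * of_real k) \<longleftrightarrow> Re (gm + 1/2) = 0"
  proof
    assume "Re (gm + 1/2) = 0"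
    then show "\<exists>k :: real. gm = - 1/2 + \<i> * of_real k \<and> g0 = - 2 * \<i> * of_real k
                     \<and> g1 = 1/2 + \<i> * of_real k"
      by (intro exI[of _ "Im gm"]) (simp add: g0 g1 complex_eq_iff)
  qed auto
  moreover have "(\<forall>p q :: real. p * q < 0 \<longrightarrow>
            (\<exists>eps0 > 0. \<forall>eps. 0 < eps \<and> eps < eps0 \<longrightarrow>
               (\<forall>z. poly (D_eps gm g0 g1 p q eps) z = 0 \<longrightarrow> cmod z = 1)))
         \<longleftrightarrow> Re (gm + 1/2) = 0"
  proof
    assume "\<forall>p q :: real. p * q < 0 \<longrightarrow>
            (\<exists>eps0 > 0. \<forall>eps. 0 < eps \<and> eps < eps0 \<longrightarrow>
               (\<forall>z. poly (D_eps gm g0 g1 p q eps) z = 0 \<longrightarrow> cmod z = 1))"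
    then obtain eps0 where "eps0 > 0" "\<forall>eps. 0 < eps \<and> eps < eps0 \<longrightarrow>
               (\<forall>z. poly (D_eps gm g0 g1 1 (-1) eps) z = 0 \<longrightarrow> cmod z = 1)"
      by (metis mult_minus1_right neg_less_0_iff_less zero_less_one)
    then show "Re (gm + 1/2) = 0" by (rule unimodular_roots_imp_imaginary[OF assms])
  qed (use imaginary_imp_unimodular_roots[OF assms] in blast)
  ultimately show ?thesis by simp
qed

end
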